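(* Let $\rho$ be a probability measure on rooted infinite graphs with finite expected degree. Then the tree entropy $\mathbf h(\rho)$ is finite.
   Context: Graphs are connected and locally finite, and may have multiple edges. - $p_k(x;G)$ is the probability that simple random walk on $G$ started at $x$ returns to $x$ after $k$ steps. Simple random walk moves from $x$ to $y$ with probability equal to the number of edges joining $x,y$ divided by $\deg_G(x)$. - The expected degree of $\rho$ is $\int\deg_G(x)\,d\rho(G,x)$. - The tree entropy is $\mathbf h(\rho):=\int\bigl(\log\deg_G(x)-\sum_{k\ge1}\frac1k p_k(x;G)\bigr)\,d\rho(G,x)$. *)

theory Defs
  imports "HOL-Probability.Probability"
begin

text \<open>A (labelled) graph on vertex set \<nat> is given by its edge-multiplicity
  function A: A x y = number of edges joining x and y.\<close>

definition deg :: "(nat \<Rightarrow> nat \<Rightarrow> nat) \<Rightarrow> nat \<Rightarrow> nat" where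
  "deg A x = (\<Sum>z\<in>{z. A x z \<noteq> 0}. A x z)"

definition inf_graph :: "(nat \<Rightarrow> nat \<Rightarrow> nat) \<Rightarrow> bool" where
  "inf_graph A \<longleftrightarrow>
     (\<forall>x y. A x y = A y x) \<and> (\<forall>x. A x x = 0) \<and>
     (\<forall>x. finite {y. A x y \<noteq> 0}) \<and>
     (\<forall>x y. (x, y) \<in> {(u, v). A u v \<noteq> 0}\<^sup>*)"

primrec walk_prob :: "(nat \<Rightarrow> nat \<Rightarrow> nat) \<Rightarrow> nat \<Rightarrow> nat \<Rightarrow> nat \<Rightarrow> real" where
  "walk_prob A 0 x y = (if x = y then 1 else 0)"
| "walk_prob A (Suc k) x y =
     (\<Sum>z\<in>{z. A x z \<noteq> 0}. real (A x z) / real (deg A x) * walk_prob A k z y)"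

definition ret_prob :: "(nat \<Rightarrow> nat \<Rightarrow> nat) \<Rightarrow> nat \<Rightarrow> nat \<Rightarrow> real" where
  "ret_prob A k x = walk_prob A k x x"

text \<open>Measurable space of rooted labelled graphs: (edge multiplicities, root).\<close>
definition graph_space :: "((nat \<Rightarrow> nat \<Rightarrow> nat) \<times> nat) measure" where
  "graph_space = (\<Pi>\<^sub>M x\<in>UNIV. \<Pi>\<^sub>M y\<in>UNIV. count_space UNIV) \<Otimes>\<^sub>M count_space UNIV"

definition tree_entropy_integrand :: "(nat \<Rightarrow> nat \<Rightarrow> nat) \<times> nat \<Rightarrow> real" where
  "tree_entropy_integrand G =
     ln (real (deg (fst G) (snd G))) -
     (\<Sum>k. ret_prob (fst G) (Suc k) (snd G) / real (Suc k))"

end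

theory Submission
  imports Defs
begin

(* Since ln deg(x) <= deg(x), it suffices to bound sum_k p_k(x)/k by a constant multiple of deg(x);
   finite expected degree then gives integrability.  On an infinite connected graph every finite
   vertex set has an edge leaving it, and a co-area argument (peeling off level sets) turns this
   into a Nash inequality
     <f,f>^3 <= 4 (sum_y deg(y) f(y))^4 (<f,f> - <Pf,Pf>)
   for nonnegative finitely supported f, where P is the transition operator and
   <f,g> = sum_y deg(y) f(y) g(y) is the inner product for which P is self-adjoint.
   For f = p_t(., x) reversibility gives <f,f> = deg(x) p_2t(x) and sum_y deg(y) f(y) = deg(x),
   so r_t = p_2t(x) satisfies r_t^3 <= 4 deg(x)^2 (r_t - r_(t+1)), whence r_t <= 2 deg(x) / sqrt t.
   Odd return probabilities are dominated by even ones, so p_k(x) <= 4 deg(x) / sqrt k and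
   sum_k p_k(x)/k <= 4 zeta(3/2) deg(x). *)

section \<open>Transition operator, balls and energy\<close>

definition neighbours :: "(nat \<Rightarrow> nat \<Rightarrow> nat) \<Rightarrow> nat \<Rightarrow> nat set" where
  "neighbours A y = {z. A y z \<noteq> 0}"

definition markov_op :: "(nat \<Rightarrow> nat \<Rightarrow> nat) \<Rightarrow> (nat \<Rightarrow> real) \<Rightarrow> nat \<Rightarrow> real" where
  "markov_op A f y = (\<Sum>z\<in>neighbours A y. real (A y z) * f z) / real (deg A y)"

primrec graph_ball :: "(nat \<Rightarrow> nat \<Rightarrow> nat) \<Rightarrow> nat \<Rightarrow> nat \<Rightarrow> nat set" where
  "graph_ball A x 0 = {x}"
| "graph_ball A x (Suc n) = graph_ball A x n \<union> (\<Union>y\<in>graph_ball A x n. neighbours A y)"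

definition deg_inner :: "(nat \<Rightarrow> nat \<Rightarrow> nat) \<Rightarrow> nat set \<Rightarrow> (nat \<Rightarrow> real) \<Rightarrow> (nat \<Rightarrow> real) \<Rightarrow> real"
  where "deg_inner A V f g = (\<Sum>y\<in>V. real (deg A y) * f y * g y)"

definition markov_energy :: "(nat \<Rightarrow> nat \<Rightarrow> nat) \<Rightarrow> nat set \<Rightarrow> (nat \<Rightarrow> real) \<Rightarrow> real" where
  "markov_energy A V f = (\<Sum>w\<in>V. \<Sum>y\<in>V. real (A w y) * (f y - markov_op A f w)\<^sup>2)"

lemma real_deg_eq_sum: "real (deg A y) = (\<Sum>z\<in>neighbours A y. real (A y z))"
  unfolding deg_def neighbours_def by simp

lemma walk_prob_Suc_eq_markov_op: "walk_prob A (Suc k) y x = markov_op A (\<lambda>z. walk_prob A k z x) y"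
  unfolding markov_op_def neighbours_def by (simp add: sum_divide_distrib)

lemma walk_prob_nonneg: "0 \<le> walk_prob A k y x"
  by (induction k arbitrary: y) (simp_all add: sum_nonneg)

lemma markov_op_nonneg: "(\<And>z. 0 \<le> f z) \<Longrightarrow> 0 \<le> markov_op A f y"
  unfolding markov_op_def by (simp add: sum_nonneg)

lemma markov_energy_nonneg: "0 \<le> markov_energy A V f"
  unfolding markov_energy_def by (simp add: sum_nonneg)

lemma graph_ball_root: "x \<in> graph_ball A x n"
  by (induction n) auto

lemma graph_ball_mono: "n \<le> m \<Longrightarrow> graph_ball A x n \<subseteq> graph_ball A x m"
  by (induction m) (auto simp: le_Suc_eq)

lemma neighbours_subset_graph_ball:
  "y \<in> graph_ball A x n \<Longrightarrow> n < R \<Longrightarrow> neighbours A y \<subseteq> graph_ball A x R"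
  using graph_ball_mono[of "Suc n" R A x] by auto

lemma deg_inner_le_half_sum:
  "deg_inner A V f g \<le> (deg_inner A V f f + deg_inner A V g g) / 2"
proof -
  have pointwise: "real (deg A y) * f y * g y
      \<le> (real (deg A y) * f y * f y + real (deg A y) * g y * g y) / 2" for y
  proof -
    have "2 * (f y * g y) \<le> f y * f y + g y * g y"
      using zero_le_power2[of "f y - g y"] by (simp add: power2_eq_square algebra_simps)
    then have "real (deg A y) * (2 * (f y * g y)) \<le> real (deg A y) * (f y * f y + g y * g y)"
      by (rule mult_left_mono) simp
    then show ?thesis
      by (simp add: algebra_simps)
  qed
  have "deg_inner A V f g \<le> (\<Sum>y\<in>V. (real (deg A y) * f y * f y + real (deg A y) * g y * g y) / 2)"
    unfolding deg_inner_def using pointwise by (rule sum_mono)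
  then show ?thesis
    by (simp add: deg_inner_def sum.distrib flip: sum_divide_distrib)
qed

(* g is read at the head and h at the tail of each edge, as f and P f are in markov_energy. *)
definition edge_variation ::
    "(nat \<Rightarrow> nat \<Rightarrow> nat) \<Rightarrow> nat set \<Rightarrow> (nat \<Rightarrow> real) \<Rightarrow> (nat \<Rightarrow> real) \<Rightarrow> real" where
  "edge_variation A V g h = (\<Sum>w\<in>V. \<Sum>y\<in>V. real (A w y) * \<bar>g y - h w\<bar>)"

lemma edge_variation_nonneg: "0 \<le> edge_variation A V g h"
  unfolding edge_variation_def by (intro sum_nonneg mult_nonneg_nonneg) simp_all

lemma abs_diff_truncate:
  fixes a b m :: real
  assumes "0 < m" "a = 0 \<or> m \<le> a" "b = 0 \<or> m \<le> b"
  shows "\<bar>a - b\<bar> = \<bar>max (a - m) 0 - max (b - m) 0\<bar>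
           + m * \<bar>of_bool (a \<noteq> 0) - of_bool (b \<noteq> 0)\<bar>"
  using assms by (cases "a = 0"; cases "b = 0") (auto simp: max_def)

lemma edge_variation_truncate:
  assumes "0 < m" "\<And>y. g y = 0 \<or> m \<le> g y" "\<And>w. h w = 0 \<or> m \<le> h w"
  shows "edge_variation A V g h
       = edge_variation A V (\<lambda>y. max (g y - m) 0) (\<lambda>w. max (h w - m) 0)
         + m * edge_variation A V (indicator {y. g y \<noteq> 0}) (indicator {w. h w \<noteq> 0})"
  unfolding edge_variation_def sum_distrib_left sum.distrib[symmetric]
proof (intro sum.cong refl)
  fix w y
  have "\<bar>g y - h w\<bar> = \<bar>max (g y - m) 0 - max (h w - m) 0\<bar>
      + m * \<bar>indicator {y. g y \<noteq> 0} y - indicator {w. h w \<noteq> 0} w\<bar>"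
    using abs_diff_truncate[OF assms(1) assms(2)[of y] assms(3)[of w]] by (simp add: indicator_def)
  then show "real (A w y) * \<bar>g y - h w\<bar> = real (A w y) * \<bar>max (g y - m) 0 - max (h w - m) 0\<bar>
      + m * (real (A w y) * \<bar>indicator {y. g y \<noteq> 0} y - indicator {w. h w \<noteq> 0} w\<bar>)"
    by (simp add: distrib_left)
qed

lemma double_sum_Cauchy_Schwarz:
  fixes a b :: "'a \<Rightarrow> 'b \<Rightarrow> real"
  shows "(\<Sum>w\<in>V. \<Sum>y\<in>W. a w y * b w y)\<^sup>2
       \<le> (\<Sum>w\<in>V. \<Sum>y\<in>W. (a w y)\<^sup>2) * (\<Sum>w\<in>V. \<Sum>y\<in>W. (b w y)\<^sup>2)"
  using Cauchy_Schwarz_ineq_sum[where a = "\<lambda>p. a (fst p) (snd p)" and b = "\<lambda>p. b (fst p) (snd p)"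
      and I = "V \<times> W"]
  by (simp add: sum.cartesian_product split_beta)

lemma edge_variation_squares_le:
  assumes "\<And>y. 0 \<le> f y" "\<And>w. 0 \<le> g w"
  shows "(edge_variation A V (\<lambda>y. (f y)\<^sup>2) (\<lambda>w. (g w)\<^sup>2))\<^sup>2
       \<le> (\<Sum>w\<in>V. \<Sum>y\<in>V. real (A w y) * (f y - g w)\<^sup>2)
         * (\<Sum>w\<in>V. \<Sum>y\<in>V. real (A w y) * (f y + g w)\<^sup>2)"
proof -
  have "real (A w y) * \<bar>(f y)\<^sup>2 - (g w)\<^sup>2\<bar>
      = (sqrt (real (A w y)) * \<bar>f y - g w\<bar>) * (sqrt (real (A w y)) * (f y + g w))" for w y
  proof -
    have "\<bar>(f y)\<^sup>2 - (g w)\<^sup>2\<bar> = \<bar>f y - g w\<bar> * (f y + g w)"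
      using assms(1)[of y] assms(2)[of w]
      by (simp add: power2_eq_square abs_mult square_diff_square_factored)
    moreover have "sqrt (real (A w y)) * sqrt (real (A w y)) = real (A w y)"
      by simp
    ultimately show ?thesis
      by (metis mult.assoc mult.left_commute)
  qed
  then have "edge_variation A V (\<lambda>y. (f y)\<^sup>2) (\<lambda>w. (g w)\<^sup>2)
      = (\<Sum>w\<in>V. \<Sum>y\<in>V. (sqrt (real (A w y)) * \<bar>f y - g w\<bar>) * (sqrt (real (A w y)) * (f y + g w)))"
    by (simp add: edge_variation_def)
  also note double_sum_Cauchy_Schwarz
  finally show ?thesis
    by (simp add: power_mult_distrib)
qed

lemma finite_support_has_max:
  fixes f :: "'a \<Rightarrow> real"
  assumes "finite {y. f y \<noteq> 0}" "\<And>y. 0 \<le> f y"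
  obtains v where "\<And>y. f y \<le> f v"
proof (cases "{y. f y \<noteq> 0} = {}")
  case True
  then show ?thesis
    using that by auto
next
  case False
  then obtain v where "v \<in> {y. f y \<noteq> 0}" "f v = Max (f ` {y. f y \<noteq> 0})"
    using Max_in[of "f ` {y. f y \<noteq> 0}"] assms(1) by fastforce
  moreover have "f y \<le> f v" for y
    using assms calculation assms(2)[of v] by (cases "f y = 0") auto
  ultimately show ?thesis
    using that by blast
qed

lemma min_positive_level:
  fixes g h :: "'a \<Rightarrow> real"
  assumes fin: "finite {y. g y \<noteq> 0}" "finite {w. h w \<noteq> 0}" and "g v \<noteq> 0"
    and nonneg: "\<And>y. 0 \<le> g y" "\<And>w. 0 \<le> h w"
  obtains m where "0 < m" "\<And>y. g y = 0 \<or> m \<le> g y" "\<And>w. h w = 0 \<or> m \<le> h w"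
    and "card {y. max (g y - m) 0 \<noteq> 0} + card {w. max (h w - m) 0 \<noteq> 0}
         < card {y. g y \<noteq> 0} + card {w. h w \<noteq> 0}"
proof
  define m where "m = Min (g ` {y. g y \<noteq> 0} \<union> h ` {w. h w \<noteq> 0})"
  have "m \<in> g ` {y. g y \<noteq> 0} \<union> h ` {w. h w \<noteq> 0}"
    unfolding m_def using fin \<open>g v \<noteq> 0\<close> by (intro Min_in) auto
  then show "0 < m"
    using nonneg by (auto simp: order.order_iff_strict)
  show "g y = 0 \<or> m \<le> g y" "h w = 0 \<or> m \<le> h w" for y w
    unfolding m_def using fin by (auto intro: Min_le)
  have sub: "{y. max (g y - m) 0 \<noteq> 0} \<subseteq> {y. g y \<noteq> 0}" "{w. max (h w - m) 0 \<noteq> 0} \<subseteq> {w. h w \<noteq> 0}"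
    using \<open>0 < m\<close> by (auto simp: max_def)
  from \<open>m \<in> g ` {y. g y \<noteq> 0} \<union> h ` {w. h w \<noteq> 0}\<close>
  consider y where "g y \<noteq> 0" "g y = m" | w where "h w \<noteq> 0" "h w = m"
    by blast
  then show "card {y. max (g y - m) 0 \<noteq> 0} + card {w. max (h w - m) 0 \<noteq> 0}
      < card {y. g y \<noteq> 0} + card {w. h w \<noteq> 0}"
  proof cases
    case (1 y)
    then have "y \<notin> {y. max (g y - m) 0 \<noteq> 0}"
      by simp
    with 1 have "{y. max (g y - m) 0 \<noteq> 0} \<subset> {y. g y \<noteq> 0}"
      using sub(1) by blast
    then have "card {y. max (g y - m) 0 \<noteq> 0} < card {y. g y \<noteq> 0}"
      by (rule psubset_card_mono[OF fin(1)])
    then show ?thesis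
      using card_mono[OF fin(2) sub(2)] by linarith
  next
    case (2 w)
    then have "w \<notin> {w. max (h w - m) 0 \<noteq> 0}"
      by simp
    with 2 have "{w. max (h w - m) 0 \<noteq> 0} \<subset> {w. h w \<noteq> 0}"
      using sub(2) by blast
    then have "card {w. max (h w - m) 0 \<noteq> 0} < card {w. h w \<noteq> 0}"
      by (rule psubset_card_mono[OF fin(2)])
    then show ?thesis
      using card_mono[OF fin(1) sub(1)] by linarith
  qed
qed

lemma power3_le_of_chain:
  fixes u L s \<Phi> E S :: real
  assumes "0 \<le> u" "0 \<le> E" "u \<le> L * s" "s\<^sup>2 \<le> \<Phi>" "\<Phi>\<^sup>2 \<le> E * S" "S \<le> 4 * u"
  shows "u ^ 3 \<le> 4 * L ^ 4 * E"
proof -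
  have "u\<^sup>2 \<le> L\<^sup>2 * \<Phi>"
  proof -
    have "u\<^sup>2 \<le> (L * s)\<^sup>2"
      using assms(3,1) by (rule power_mono)
    also have "\<dots> \<le> L\<^sup>2 * \<Phi>"
      using assms(4) by (simp add: power_mult_distrib mult_left_mono)
    finally show ?thesis .
  qed
  then have "u\<^sup>2 * u\<^sup>2 \<le> (L\<^sup>2 * \<Phi>)\<^sup>2"
    using assms(1) by (metis power2_eq_square power_mono zero_le_power2)
  also have "\<dots> = L ^ 4 * \<Phi>\<^sup>2"
    by (simp add: power_mult_distrib flip: power_mult)
  also have "\<dots> \<le> L ^ 4 * (E * (4 * u))"
    using assms(2,5,6) by (intro mult_left_mono) (auto intro: order_trans mult_left_mono)
  finally have "u * u ^ 3 \<le> u * (4 * L ^ 4 * E)"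
    by (simp add: power2_eq_square power3_eq_cube mult_ac)
  then show ?thesis
    using assms(1,2) by (cases "u = 0") (auto simp: mult_le_cancel_left)
qed

lemma cubic_decay:
  fixes r :: "nat \<Rightarrow> real"
  assumes "0 < K" and nonneg: "\<And>t. 0 \<le> r t" and antimono: "\<And>t. r (Suc t) \<le> r t"
    and cubic: "\<And>t. r t ^ 3 \<le> K * (r t - r (Suc t))"
  shows "real t * (r t)\<^sup>2 \<le> K"
proof (induction t)
  case 0
  then show ?case
    using \<open>0 < K\<close> by simp
next
  case (Suc t)
  define a where "a = (r t)\<^sup>2"
  define b where "b = (r (Suc t))\<^sup>2"
  have "0 \<le> b" "b \<le> a"
    unfolding a_def b_def using nonneg antimono by (simp_all add: power_mono)
  have "a * b \<le> K * (a - b)"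
  proof -
    have "a * b \<le> a * a"
      using \<open>b \<le> a\<close> by (intro mult_left_mono) (simp_all add: a_def)
    also have "\<dots> = r t ^ 3 * r t"
      by (simp add: a_def power2_eq_square power3_eq_cube)
    also have "\<dots> \<le> K * (r t - r (Suc t)) * (r t + r (Suc t))"
      using cubic[of t] nonneg[of t] nonneg[of "Suc t"] antimono[of t] \<open>0 < K\<close>
      by (intro mult_mono) simp_all
    also have "\<dots> = K * (a - b)"
      unfolding a_def b_def by (simp add: algebra_simps power2_eq_square)
    finally show ?thesis .
  qed
  have "real (Suc t) * b * (K + a) = real (Suc t) * (b * K + a * b)"
    by (simp add: algebra_simps)
  also have "\<dots> \<le> real (Suc t) * (b * K + K * (a - b))"
    using \<open>a * b \<le> K * (a - b)\<close> by (intro mult_left_mono) simp_all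
  also have "\<dots> = K * (real t * a + a)"
    by (simp add: algebra_simps)
  also have "\<dots> \<le> K * (K + a)"
    using Suc.IH \<open>0 < K\<close> unfolding a_def by simp
  finally have "real (Suc t) * b \<le> K"
    using \<open>0 < K\<close> \<open>0 \<le> b\<close> \<open>b \<le> a\<close> by (simp add: mult_le_cancel_right_pos)
  then show ?case
    unfolding b_def .
qed

definition zeta_three_halves :: real where
  "zeta_three_halves = (\<Sum>j. real (Suc j) powr (-3/2))"

lemma summable_Suc_powr_three_halves: "summable (\<lambda>j. real (Suc j) powr (-3/2))"
  using summable_Suc_iff[where f = "\<lambda>n. real n powr (-3/2)"] summable_real_powr_iff by simp

lemma powr_minus_three_halves: "0 < a \<Longrightarrow> a powr (-3/2) = 1 / (a * sqrt a)"
  by (simp add: powr_minus_divide powr_add[of a 1 "1/2", simplified] powr_half_sqrt)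

section \<open>Reversibility on infinite connected graphs\<close>

context
  fixes A :: "nat \<Rightarrow> nat \<Rightarrow> nat"
  assumes graph: "inf_graph A"
begin

lemma adj_sym: "A y z = A z y"
  using graph unfolding inf_graph_def by blast

lemma adj_irrefl: "A y y = 0"
  using graph unfolding inf_graph_def by blast

lemma finite_neighbours: "finite (neighbours A y)"
  using graph unfolding inf_graph_def neighbours_def by blast

lemma adj_connected: "(y, z) \<in> {(u, v). A u v \<noteq> 0}\<^sup>*"
  using graph unfolding inf_graph_def by blast

lemma deg_pos: "0 < deg A y"
proof -
  have "Suc y \<noteq> y"
    by simp
  with adj_connected[of y "Suc y"] obtain w where "A y w \<noteq> 0"
    by (cases rule: converse_rtranclE) auto
  moreover have "A y w \<le> deg A y"
    unfolding deg_def using finite_neighbours[of y] \<open>A y w \<noteq> 0\<close>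
    by (intro member_le_sum) (auto simp: neighbours_def)
  ultimately show ?thesis
    by simp
qed

lemma finite_graph_ball: "finite (graph_ball A x n)"
  by (induction n) (auto simp: finite_neighbours)

lemma markov_op_support:
  assumes "{z. f z \<noteq> 0} \<subseteq> graph_ball A x n"
  shows "{y. markov_op A f y \<noteq> 0} \<subseteq> graph_ball A x (Suc n)"
proof
  fix y
  assume "y \<in> {y. markov_op A f y \<noteq> 0}"
  then have "(\<Sum>z\<in>neighbours A y. real (A y z) * f z) \<noteq> 0"
    unfolding markov_op_def by auto
  then obtain z where "z \<in> neighbours A y" "f z \<noteq> 0"
    by (rule sum.not_neutral_contains_not_neutral) simp
  then show "y \<in> graph_ball A x (Suc n)"
    using assms adj_sym[of y z] by (auto simp: neighbours_def)
qed

lemma walk_prob_support: "{y. walk_prob A t y x \<noteq> 0} \<subseteq> graph_ball A x t"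
proof (induction t)
  case 0
  show ?case
    by auto
next
  case (Suc t)
  show ?case
    unfolding walk_prob_Suc_eq_markov_op by (rule markov_op_support[OF Suc])
qed

lemma sum_adj_eq_deg:
  assumes "neighbours A y \<subseteq> V" "finite V"
  shows "(\<Sum>z\<in>V. real (A y z)) = real (deg A y)"
  unfolding real_deg_eq_sum using assms
  by (intro sum.mono_neutral_right) (auto simp: neighbours_def)

lemma deg_mult_markov_op:
  assumes "{z. f z \<noteq> 0} \<subseteq> V" "finite V"
  shows "real (deg A y) * markov_op A f y = (\<Sum>z\<in>V. real (A y z) * f z)"
proof -
  have "real (deg A y) * markov_op A f y = (\<Sum>z\<in>neighbours A y. real (A y z) * f z)"
    unfolding markov_op_def using deg_pos[of y] by simp
  also have "\<dots> = (\<Sum>z\<in>V. real (A y z) * f z)"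
    using assms finite_neighbours[of y]
    by (intro sum.mono_neutral_cong) (auto simp: neighbours_def)
  finally show ?thesis .
qed

lemma deg_inner_markov_op:
  assumes "{z. f z \<noteq> 0} \<subseteq> V" "finite V"
  shows "deg_inner A V (markov_op A f) g = (\<Sum>w\<in>V. \<Sum>y\<in>V. real (A w y) * (f y * g w))"
  unfolding deg_inner_def using deg_mult_markov_op[OF assms]
  by (simp add: sum_distrib_right mult.assoc)

lemma sum_edges_swap:
  "(\<Sum>w\<in>V. \<Sum>y\<in>V. real (A w y) * F w y) = (\<Sum>w\<in>V. \<Sum>y\<in>V. real (A w y) * F y w)"
  by (subst sum.swap) (simp add: adj_sym)

lemma markov_op_self_adjoint:
  assumes "{z. f z \<noteq> 0} \<subseteq> V" "{z. g z \<noteq> 0} \<subseteq> V" "finite V"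
  shows "deg_inner A V (markov_op A f) g = deg_inner A V f (markov_op A g)"
proof -
  have "deg_inner A V (markov_op A f) g = (\<Sum>w\<in>V. \<Sum>y\<in>V. real (A w y) * (f y * g w))"
    using assms by (simp add: deg_inner_markov_op)
  also have "\<dots> = (\<Sum>w\<in>V. \<Sum>y\<in>V. real (A w y) * (g y * f w))"
    by (subst sum_edges_swap) (simp add: mult.commute)
  also have "\<dots> = deg_inner A V (markov_op A g) f"
    using assms by (simp add: deg_inner_markov_op)
  finally show ?thesis
    by (simp add: deg_inner_def mult_ac)
qed

lemma sum_edges_eq_sum_deg:
  assumes "{w. p w \<noteq> 0} \<subseteq> graph_ball A x n" "n < R"
  shows "(\<Sum>w\<in>graph_ball A x R. \<Sum>y\<in>graph_ball A x R. real (A w y) * p w)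
       = (\<Sum>w\<in>graph_ball A x R. real (deg A w) * p w)"
proof (rule sum.cong)
  fix w
  show "(\<Sum>y\<in>graph_ball A x R. real (A w y) * p w) = real (deg A w) * p w"
  proof (cases "p w = 0")
    case False
    then have "neighbours A w \<subseteq> graph_ball A x R"
      using assms by (intro neighbours_subset_graph_ball) auto
    then show ?thesis
      by (simp add: sum_adj_eq_deg finite_graph_ball flip: sum_distrib_right)
  qed simp
qed simp

lemma sum_deg_markov_op:
  assumes "{z. f z \<noteq> 0} \<subseteq> graph_ball A x n" "n < R"
  shows "(\<Sum>y\<in>graph_ball A x R. real (deg A y) * markov_op A f y)
       = (\<Sum>y\<in>graph_ball A x R. real (deg A y) * f y)"
proof -
  have supp: "{z. f z \<noteq> 0} \<subseteq> graph_ball A x R"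
    using assms graph_ball_mono[of n R] by auto
  have "(\<Sum>y\<in>graph_ball A x R. real (deg A y) * markov_op A f y)
      = deg_inner A (graph_ball A x R) (markov_op A f) (\<lambda>_. 1)"
    by (simp add: deg_inner_def)
  also have "\<dots> = (\<Sum>w\<in>graph_ball A x R. \<Sum>y\<in>graph_ball A x R. real (A w y) * f y)"
    using supp by (simp add: deg_inner_markov_op finite_graph_ball)
  also have "\<dots> = (\<Sum>w\<in>graph_ball A x R. \<Sum>y\<in>graph_ball A x R. real (A w y) * f w)"
    by (rule sum_edges_swap)
  also have "\<dots> = (\<Sum>y\<in>graph_ball A x R. real (deg A y) * f y)"
    using assms by (rule sum_edges_eq_sum_deg)
  finally show ?thesis .
qed

lemma sum_deg_walk_prob_0:
  "(\<Sum>y\<in>graph_ball A x R. real (deg A y) * walk_prob A 0 y x * h y) = real (deg A x) * h x"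
proof -
  have "(\<Sum>y\<in>graph_ball A x R. real (deg A y) * walk_prob A 0 y x * h y)
      = (\<Sum>y\<in>graph_ball A x R. if y = x then real (deg A y) * h y else 0)"
    by (intro sum.cong) auto
  then show ?thesis
    by (simp add: finite_graph_ball graph_ball_root)
qed

lemma sum_deg_walk_prob:
  "t \<le> R \<Longrightarrow> (\<Sum>y\<in>graph_ball A x R. real (deg A y) * walk_prob A t y x) = real (deg A x)"
proof (induction t)
  case 0
  show ?case
    using sum_deg_walk_prob_0[where h = "\<lambda>_. 1"] by simp
next
  case (Suc t)
  then show ?case
    using sum_deg_markov_op[OF walk_prob_support, of t R] unfolding walk_prob_Suc_eq_markov_op by simp
qed

lemma deg_inner_walk_prob:
  "a + b \<le> R \<Longrightarrow> deg_inner A (graph_ball A x R) (\<lambda>y. walk_prob A a y x) (\<lambda>y. walk_prob A b y x)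
     = real (deg A x) * walk_prob A (a + b) x x"
proof (induction a arbitrary: b)
  case 0
  show ?case
    unfolding deg_inner_def by (simp add: sum_deg_walk_prob_0 del: walk_prob.simps)
next
  case (Suc a)
  have supp: "{y. walk_prob A k y x \<noteq> 0} \<subseteq> graph_ball A x R" if "k \<le> R" for k
    using walk_prob_support graph_ball_mono[OF that] by blast
  have "deg_inner A (graph_ball A x R) (\<lambda>y. walk_prob A (Suc a) y x) (\<lambda>y. walk_prob A b y x)
      = deg_inner A (graph_ball A x R) (\<lambda>y. walk_prob A a y x) (\<lambda>y. walk_prob A (Suc b) y x)"
    unfolding walk_prob_Suc_eq_markov_op
    using Suc.prems by (intro markov_op_self_adjoint supp finite_graph_ball) auto
  also have "\<dots> = real (deg A x) * walk_prob A (Suc a + b) x x"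
    using Suc.IH[of "Suc b"] Suc.prems by (simp del: walk_prob.simps)
  finally show ?case .
qed

lemma sum_edges_square:
  assumes "{y. f y \<noteq> 0} \<subseteq> graph_ball A x n" "n < R"
  shows "(\<Sum>w\<in>graph_ball A x R. \<Sum>y\<in>graph_ball A x R. real (A w y) * (f w)\<^sup>2)
       = deg_inner A (graph_ball A x R) f f"
  using assms by (subst sum_edges_eq_sum_deg) (auto simp: deg_inner_def power2_eq_square mult.assoc)

lemma markov_energy_eq:
  assumes supp: "{y. f y \<noteq> 0} \<subseteq> graph_ball A x n" and "n + 2 \<le> R"
  shows "markov_energy A (graph_ball A x R) f
       = deg_inner A (graph_ball A x R) f f - deg_inner A (graph_ball A x R) (markov_op A f) (markov_op A f)"
proof -
  let ?V = "graph_ball A x R" and ?Pf = "markov_op A f"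
  have "{y. f y \<noteq> 0} \<subseteq> ?V"
    using assms graph_ball_mono[of n R] by auto
  then have cross: "(\<Sum>w\<in>?V. \<Sum>y\<in>?V. real (A w y) * (f y * ?Pf w)) = deg_inner A ?V ?Pf ?Pf"
    by (simp add: deg_inner_markov_op finite_graph_ball)
  have square: "(\<Sum>w\<in>?V. \<Sum>y\<in>?V. real (A w y) * (f y)\<^sup>2) = deg_inner A ?V f f"
    using assms by (subst sum_edges_swap) (simp add: sum_edges_square)
  have square': "(\<Sum>w\<in>?V. \<Sum>y\<in>?V. real (A w y) * (?Pf w)\<^sup>2) = deg_inner A ?V ?Pf ?Pf"
    using markov_op_support[OF supp] assms by (intro sum_edges_square[where n = "Suc n"]) auto
  have "markov_energy A ?V f = (\<Sum>w\<in>?V. \<Sum>y\<in>?V. real (A w y) * (f y)\<^sup>2)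
      - 2 * (\<Sum>w\<in>?V. \<Sum>y\<in>?V. real (A w y) * (f y * ?Pf w))
      + (\<Sum>w\<in>?V. \<Sum>y\<in>?V. real (A w y) * (?Pf w)\<^sup>2)"
    unfolding markov_energy_def
    by (simp add: power2_diff algebra_simps sum.distrib sum_subtractf sum_distrib_left)
  then show ?thesis
    using square cross square' by simp
qed

subsection \<open>Isoperimetry and Nash's inequality\<close>

lemma exists_boundary_edge:
  assumes "finite S" "finite T" "y0 \<in> S"
  shows "\<exists>w y. A w y \<noteq> 0 \<and> (y \<in> S) \<noteq> (w \<in> T)"
proof (rule ccontr)
  assume "\<not> ?thesis"
  then have no_edge: "\<And>w y. A w y \<noteq> 0 \<Longrightarrow> (y \<in> S) = (w \<in> T)"
    by blast
  have "v \<in> S \<union> T" for v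
    using adj_connected[of y0 v]
  proof (induction rule: rtrancl_induct)
    case base
    then show ?case
      using assms(3) by simp
  next
    case (step a b)
    then have "A a b \<noteq> 0"
      by simp
    then have "A b a \<noteq> 0"
      by (simp add: adj_sym)
    with \<open>A a b \<noteq> 0\<close> show ?case
      using step.IH no_edge[of a b] no_edge[of b a] by blast
  qed
  then have "UNIV \<subseteq> S \<union> T"
    by blast
  moreover have "finite (S \<union> T)"
    using assms(1,2) by simp
  ultimately have "finite (UNIV :: nat set)"
    by (rule finite_subset)
  then show False
    by simp
qed

lemma one_le_edge_variation_indicator:
  assumes "finite V" "F \<subseteq> V" "\<And>y. y \<in> F \<Longrightarrow> neighbours A y \<subseteq> V"
    and "S \<subseteq> F" "T \<subseteq> F" "S \<noteq> {}"
  shows "1 \<le> edge_variation A V (indicator S) (indicator T)"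
proof -
  have "finite S" "finite T"
    using assms(1,2,4,5) by (auto intro: finite_subset)
  with \<open>S \<noteq> {}\<close> obtain w y where edge: "A w y \<noteq> 0" "(y \<in> S) \<noteq> (w \<in> T)"
    using exists_boundary_edge by blast
  have "w \<in> V \<and> y \<in> V"
  proof (cases "y \<in> S")
    case True
    then have "y \<in> F" "w \<in> neighbours A y"
      using assms(4) edge(1) adj_sym[of w y] by (auto simp: neighbours_def)
    then show ?thesis
      using assms(2,3) by blast
  next
    case False
    then have "w \<in> F" "y \<in> neighbours A w"
      using assms(5) edge by (auto simp: neighbours_def)
    then show ?thesis
      using assms(2,3) by blast
  qed
  let ?e = "\<lambda>w y. real (A w y) * \<bar>indicator S y - indicator T w\<bar> :: real"
  have "1 \<le> ?e w y"
    using edge by (cases "y \<in> S") (auto simp: indicator_def)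
  also have "\<dots> \<le> (\<Sum>y\<in>V. ?e w y)"
    using \<open>w \<in> V \<and> y \<in> V\<close> assms(1) by (intro member_le_sum) simp_all
  also have "\<dots> \<le> (\<Sum>w\<in>V. \<Sum>y\<in>V. ?e w y)"
    using \<open>w \<in> V \<and> y \<in> V\<close> assms(1) by (intro member_le_sum sum_nonneg) simp_all
  finally show ?thesis
    unfolding edge_variation_def .
qed

(* Co-area argument: remove the smallest positive level m of g and h; by
   one_le_edge_variation_indicator the level sets pay at least m, and induction handles the rest. *)
lemma le_edge_variation:
  assumes V: "finite V" "F \<subseteq> V" "\<And>y. y \<in> F \<Longrightarrow> neighbours A y \<subseteq> V"
    and nonneg: "\<And>y. 0 \<le> g y" "\<And>w. 0 \<le> h w"
    and supp: "{y. g y \<noteq> 0} \<subseteq> F" "{w. h w \<noteq> 0} \<subseteq> F"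
  shows "g v \<le> edge_variation A V g h"
  using nonneg supp
proof (induction "card {y. g y \<noteq> 0} + card {w. h w \<noteq> 0}" arbitrary: g h rule: less_induct)
  case less
  show ?case
  proof (cases "g v = 0")
    case True
    then show ?thesis
      using less.prems edge_variation_nonneg[of A V g h] by simp
  next
    case False
    have "{y. g y \<noteq> 0} \<subseteq> V" "{w. h w \<noteq> 0} \<subseteq> V"
      using less.prems(3,4) V(2) by auto
    then have fin: "finite {y. g y \<noteq> 0}" "finite {w. h w \<noteq> 0}"
      using V(1) by (auto intro: finite_subset)
    obtain m where "0 < m" and level: "\<And>y. g y = 0 \<or> m \<le> g y" "\<And>w. h w = 0 \<or> m \<le> h w"
      and fewer: "card {y. max (g y - m) 0 \<noteq> 0} + card {w. max (h w - m) 0 \<noteq> 0}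
         < card {y. g y \<noteq> 0} + card {w. h w \<noteq> 0}"
      using min_positive_level[OF fin False less.prems(1,2)] by blast
    have "max (g v - m) 0 \<le> edge_variation A V (\<lambda>y. max (g y - m) 0) (\<lambda>w. max (h w - m) 0)"
      using fewer less.prems(3,4) \<open>0 < m\<close> by (intro less.hyps) (auto simp: max_def)
    moreover have "1 \<le> edge_variation A V (indicator {y. g y \<noteq> 0}) (indicator {w. h w \<noteq> 0})"
      using V less.prems(3,4) False by (intro one_le_edge_variation_indicator[where F = F]) auto
    then have "m \<le> m * edge_variation A V (indicator {y. g y \<noteq> 0}) (indicator {w. h w \<noteq> 0})"
      using mult_left_mono[of 1 _ m] \<open>0 < m\<close> by simp
    moreover have "g v = max (g v - m) 0 + m"
      using level(1)[of v] False by auto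
    ultimately show ?thesis
      unfolding edge_variation_truncate[OF \<open>0 < m\<close> level] by linarith
  qed
qed

lemma sum_edges_plus_markov_op_le:
  assumes supp: "{y. f y \<noteq> 0} \<subseteq> graph_ball A x n" and "n + 2 \<le> R"
  shows "(\<Sum>w\<in>graph_ball A x R. \<Sum>y\<in>graph_ball A x R. real (A w y) * (f y + markov_op A f w)\<^sup>2)
       \<le> 4 * deg_inner A (graph_ball A x R) f f"
proof -
  let ?V = "graph_ball A x R" and ?Pf = "markov_op A f"
  have "(\<Sum>w\<in>?V. \<Sum>y\<in>?V. real (A w y) * (f y + ?Pf w)\<^sup>2)
      \<le> 2 * (\<Sum>w\<in>?V. \<Sum>y\<in>?V. real (A w y) * (f y)\<^sup>2) + 2 * (\<Sum>w\<in>?V. \<Sum>y\<in>?V. real (A w y) * (?Pf w)\<^sup>2)"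
    unfolding sum_distrib_left sum.distrib[symmetric]
  proof (intro sum_mono)
    fix w y
    have "(f y + ?Pf w)\<^sup>2 \<le> 2 * (f y)\<^sup>2 + 2 * (?Pf w)\<^sup>2"
      using zero_le_power2[of "f y - ?Pf w"] by (simp add: power2_eq_square algebra_simps)
    then have "real (A w y) * (f y + ?Pf w)\<^sup>2 \<le> real (A w y) * (2 * (f y)\<^sup>2 + 2 * (?Pf w)\<^sup>2)"
      by (rule mult_left_mono) simp
    then show "real (A w y) * (f y + ?Pf w)\<^sup>2 \<le> 2 * (real (A w y) * (f y)\<^sup>2) + 2 * (real (A w y) * (?Pf w)\<^sup>2)"
      by (simp add: distrib_left)
  qed
  also have "\<dots> = 2 * deg_inner A ?V f f + 2 * deg_inner A ?V ?Pf ?Pf"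
  proof -
    have "(\<Sum>w\<in>?V. \<Sum>y\<in>?V. real (A w y) * (f y)\<^sup>2) = deg_inner A ?V f f"
      using assms by (subst sum_edges_swap) (simp add: sum_edges_square)
    moreover have "(\<Sum>w\<in>?V. \<Sum>y\<in>?V. real (A w y) * (?Pf w)\<^sup>2) = deg_inner A ?V ?Pf ?Pf"
      using markov_op_support[OF supp] assms by (intro sum_edges_square[where n = "Suc n"]) auto
    ultimately show ?thesis
      by simp
  qed
  also have "\<dots> \<le> 4 * deg_inner A ?V f f"
    using markov_energy_eq[OF assms] markov_energy_nonneg[of A ?V f] by simp
  finally show ?thesis .
qed

lemma nash_inequality:
  assumes supp: "{y. f y \<noteq> 0} \<subseteq> graph_ball A x n" and "n + 2 \<le> R" and nonneg: "\<And>y. 0 \<le> f y"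
  shows "(deg_inner A (graph_ball A x R) f f) ^ 3
       \<le> 4 * (\<Sum>y\<in>graph_ball A x R. real (deg A y) * f y) ^ 4 * markov_energy A (graph_ball A x R) f"
proof -
  define V where "V = graph_ball A x R"
  define F where "F = graph_ball A x (Suc n)"
  have "finite V" "F \<subseteq> V" "\<And>y. y \<in> F \<Longrightarrow> neighbours A y \<subseteq> V"
    using assms(2) graph_ball_mono[of "Suc n" R A x] neighbours_subset_graph_ball[of _ A x "Suc n" R]
    unfolding V_def F_def by (auto simp: finite_graph_ball)
  have supp_F: "{y. f y \<noteq> 0} \<subseteq> F" "{y. markov_op A f y \<noteq> 0} \<subseteq> F"
    using supp markov_op_support[OF supp] graph_ball_mono[of n "Suc n" A x] unfolding F_def by auto
  obtain v where v_max: "\<And>y. f y \<le> f v"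
    using finite_support_has_max[of f] supp finite_graph_ball nonneg by (meson finite_subset)
  have "deg_inner A V f f \<le> (\<Sum>y\<in>V. real (deg A y) * f y) * f v"
    unfolding deg_inner_def sum_distrib_right
    using v_max nonneg by (intro sum_mono mult_left_mono) auto
  moreover have "(f v)\<^sup>2 \<le> edge_variation A V (\<lambda>y. (f y)\<^sup>2) (\<lambda>w. (markov_op A f w)\<^sup>2)"
    using \<open>finite V\<close> \<open>F \<subseteq> V\<close> \<open>\<And>y. y \<in> F \<Longrightarrow> neighbours A y \<subseteq> V\<close> supp_F
    by (intro le_edge_variation[where F = F]) auto
  moreover have "(edge_variation A V (\<lambda>y. (f y)\<^sup>2) (\<lambda>w. (markov_op A f w)\<^sup>2))\<^sup>2
      \<le> markov_energy A V f * (\<Sum>w\<in>V. \<Sum>y\<in>V. real (A w y) * (f y + markov_op A f w)\<^sup>2)"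
    unfolding markov_energy_def using nonneg markov_op_nonneg[OF nonneg] by (rule edge_variation_squares_le)
  moreover have "(\<Sum>w\<in>V. \<Sum>y\<in>V. real (A w y) * (f y + markov_op A f w)\<^sup>2) \<le> 4 * deg_inner A V f f"
    unfolding V_def using supp assms(2) by (rule sum_edges_plus_markov_op_le)
  moreover have "0 \<le> deg_inner A V f f"
    unfolding deg_inner_def using nonneg by (intro sum_nonneg mult_nonneg_nonneg) auto
  ultimately show ?thesis
    unfolding V_def[symmetric] using markov_energy_nonneg by (intro power3_le_of_chain) (auto simp: mult.commute)
qed

subsection \<open>Decay of return probabilities\<close>

lemma markov_energy_walk_prob:
  assumes "2 * Suc t \<le> R"
  shows "markov_energy A (graph_ball A x R) (\<lambda>y. walk_prob A t y x)
     = real (deg A x) * (walk_prob A (2 * t) x x - walk_prob A (2 * Suc t) x x)"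
proof -
  have "markov_energy A (graph_ball A x R) (\<lambda>y. walk_prob A t y x)
      = deg_inner A (graph_ball A x R) (\<lambda>y. walk_prob A t y x) (\<lambda>y. walk_prob A t y x)
      - deg_inner A (graph_ball A x R) (\<lambda>y. walk_prob A (Suc t) y x) (\<lambda>y. walk_prob A (Suc t) y x)"
    unfolding walk_prob_Suc_eq_markov_op using assms by (intro markov_energy_eq[OF walk_prob_support]) simp
  also have "\<dots> = real (deg A x) * (walk_prob A (2 * t) x x - walk_prob A (2 * Suc t) x x)"
    using assms by (simp add: deg_inner_walk_prob mult_2 right_diff_distrib del: walk_prob.simps)
  finally show ?thesis .
qed

lemma walk_prob_even_antimono: "walk_prob A (2 * Suc t) x x \<le> walk_prob A (2 * t) x x"
proof -
  have "0 \<le> real (deg A x) * (walk_prob A (2 * t) x x - walk_prob A (2 * Suc t) x x)"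
    using markov_energy_nonneg markov_energy_walk_prob[where t = t and x = x and R = "2 * Suc t"]
    by (metis order.refl)
  then show ?thesis
    using deg_pos[of x] by (simp add: zero_le_mult_iff del: walk_prob.simps)
qed

lemma walk_prob_odd_le_even: "walk_prob A (Suc (2 * t)) x x \<le> walk_prob A (2 * t) x x"
proof -
  define V where "V = graph_ball A x (2 * Suc t)"
  let ?q = "\<lambda>k y. walk_prob A k y x"
  have inner: "deg_inner A V (?q a) (?q b) = real (deg A x) * walk_prob A (a + b) x x"
    if "a + b \<le> 2 * Suc t" for a b
    unfolding V_def using that by (rule deg_inner_walk_prob)
  have "real (deg A x) * walk_prob A (Suc (2 * t)) x x = deg_inner A V (?q t) (?q (Suc t))"
    using inner[of t "Suc t"] by (simp add: mult_2 del: walk_prob.simps)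
  also have "\<dots> \<le> (deg_inner A V (?q t) (?q t) + deg_inner A V (?q (Suc t)) (?q (Suc t))) / 2"
    by (rule deg_inner_le_half_sum)
  also have "\<dots> = real (deg A x) * ((walk_prob A (2 * t) x x + walk_prob A (2 * Suc t) x x) / 2)"
    using inner[of t t] inner[of "Suc t" "Suc t"] by (simp add: mult_2 distrib_left del: walk_prob.simps)
  also have "\<dots> \<le> real (deg A x) * walk_prob A (2 * t) x x"
    using walk_prob_even_antimono[of t x] by (intro mult_left_mono) simp_all
  finally show ?thesis
    using deg_pos[of x] by simp
qed

lemma walk_prob_even_cube_le:
  "walk_prob A (2 * t) x x ^ 3
     \<le> 4 * real (deg A x) ^ 2 * (walk_prob A (2 * t) x x - walk_prob A (2 * Suc t) x x)"
proof -
  define D where "D = real (deg A x)"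
  define R where "R = 2 * Suc t"
  have R: "t + 2 \<le> R" "t + t \<le> R" "t \<le> R" "2 * Suc t \<le> R"
    unfolding R_def by simp_all
  have "(deg_inner A (graph_ball A x R) (\<lambda>y. walk_prob A t y x) (\<lambda>y. walk_prob A t y x)) ^ 3
      \<le> 4 * (\<Sum>y\<in>graph_ball A x R. real (deg A y) * walk_prob A t y x) ^ 4
        * markov_energy A (graph_ball A x R) (\<lambda>y. walk_prob A t y x)"
    by (rule nash_inequality[OF walk_prob_support R(1) walk_prob_nonneg])
  then have "(D * walk_prob A (2 * t) x x) ^ 3
      \<le> 4 * D ^ 4 * (D * (walk_prob A (2 * t) x x - walk_prob A (2 * Suc t) x x))"
    using deg_inner_walk_prob[OF R(2)] sum_deg_walk_prob[OF R(3)] markov_energy_walk_prob[OF R(4)]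
    by (simp add: D_def mult_2 del: walk_prob.simps)
  then have "D ^ 3 * walk_prob A (2 * t) x x ^ 3
      \<le> D ^ 3 * (4 * D ^ 2 * (walk_prob A (2 * t) x x - walk_prob A (2 * Suc t) x x))"
    by (simp add: power_mult_distrib power2_eq_square power3_eq_cube power4_eq_xxxx mult_ac)
  then show ?thesis
    using deg_pos[of x] unfolding D_def by (simp add: mult_le_cancel_left_pos)
qed

lemma walk_prob_self_le_sqrt:
  assumes "2 \<le> k"
  shows "walk_prob A k x x \<le> 4 * real (deg A x) / sqrt (real k)"
proof -
  define D where "D = real (deg A x)"
  define t where "t = k div 2"
  have "0 < D"
    using deg_pos[of x] by (simp add: D_def)
  have "1 \<le> t" "real k \<le> 4 * real t"
    using assms unfolding t_def by linarith+
  have "real t * (walk_prob A (2 * t) x x)\<^sup>2 \<le> 4 * D\<^sup>2"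
    using \<open>0 < D\<close> walk_prob_nonneg walk_prob_even_antimono walk_prob_even_cube_le
    unfolding D_def by (intro cubic_decay[where r = "\<lambda>t. walk_prob A (2 * t) x x"]) auto
  then have "(walk_prob A (2 * t) x x)\<^sup>2 \<le> (2 * D / sqrt (real t))\<^sup>2"
    using \<open>1 \<le> t\<close> by (simp add: field_simps power_divide)
  moreover have "0 \<le> 2 * D / sqrt (real t)"
    using \<open>0 < D\<close> by simp
  ultimately have "walk_prob A (2 * t) x x \<le> 2 * D / sqrt (real t)"
    by (rule power2_le_imp_le)
  also have "\<dots> \<le> 4 * D / sqrt (real k)"
  proof -
    have "sqrt (real k) \<le> 2 * sqrt (real t)"
      using real_sqrt_le_mono[OF \<open>real k \<le> 4 * real t\<close>] by (simp add: real_sqrt_mult)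
    then show ?thesis
      using assms \<open>1 \<le> t\<close> \<open>0 < D\<close> by (simp add: field_simps)
  qed
  moreover have "walk_prob A k x x \<le> walk_prob A (2 * t) x x"
    using walk_prob_odd_le_even[of t x] unfolding t_def
    by (cases "even k") (auto elim!: oddE simp del: walk_prob.simps)
  ultimately show ?thesis
    unfolding D_def by linarith
qed

lemma walk_prob_Suc_0_self: "walk_prob A (Suc 0) x x = 0"
  using adj_irrefl[of x] by (simp add: sum.neutral)

lemma return_term_nonneg: "0 \<le> ret_prob A (Suc j) x / real (Suc j)"
  unfolding ret_prob_def using walk_prob_nonneg by (rule divide_nonneg_nonneg) simp

lemma return_term_le:
  "ret_prob A (Suc j) x / real (Suc j) \<le> 4 * real (deg A x) * real (Suc j) powr (-3/2)"
proof (cases j)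
  case 0
  then show ?thesis
    by (simp add: ret_prob_def walk_prob_Suc_0_self del: walk_prob.simps)
next
  case (Suc i)
  then have "ret_prob A (Suc j) x / real (Suc j) \<le> 4 * real (deg A x) / sqrt (real (Suc j)) / real (Suc j)"
    unfolding ret_prob_def by (intro divide_right_mono walk_prob_self_le_sqrt) simp_all
  also have "\<dots> = 4 * real (deg A x) * real (Suc j) powr (-3/2)"
    unfolding powr_minus_three_halves[of "real (Suc j)", OF of_nat_0_less_iff[THEN iffD2, OF zero_less_Suc]]
    by (simp only: divide_divide_eq_left times_divide_eq_right mult_1_right mult.commute)
  finally show ?thesis .
qed

lemma return_series_summable: "summable (\<lambda>j. ret_prob A (Suc j) x / real (Suc j))"
proof (rule summable_comparison_test')
  show "summable (\<lambda>j. 4 * real (deg A x) * real (Suc j) powr (-3/2))"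
    by (intro summable_mult summable_Suc_powr_three_halves)
  show "norm (ret_prob A (Suc j) x / real (Suc j)) \<le> 4 * real (deg A x) * real (Suc j) powr (-3/2)" for j
    using return_term_nonneg[of j x] return_term_le[of j x] by simp
qed

lemma return_series_nonneg: "0 \<le> (\<Sum>j. ret_prob A (Suc j) x / real (Suc j))"
  using return_series_summable return_term_nonneg by (rule suminf_nonneg)

lemma return_series_le: "(\<Sum>j. ret_prob A (Suc j) x / real (Suc j)) \<le> 4 * real (deg A x) * zeta_three_halves"
proof -
  have "(\<Sum>j. ret_prob A (Suc j) x / real (Suc j)) \<le> (\<Sum>j. 4 * real (deg A x) * real (Suc j) powr (-3/2))"
    by (intro suminf_le return_term_le return_series_summable summable_mult summable_Suc_powr_three_halves)
  also have "\<dots> = 4 * real (deg A x) * zeta_three_halves"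
    unfolding zeta_three_halves_def using summable_Suc_powr_three_halves by (rule suminf_mult)
  finally show ?thesis .
qed

end

lemma abs_tree_entropy_integrand_le:
  assumes "inf_graph (fst G)"
  shows "\<bar>tree_entropy_integrand G\<bar> \<le> (1 + 4 * zeta_three_halves) * real (deg (fst G) (snd G))"
proof -
  define D where "D = real (deg (fst G) (snd G))"
  define S where "S = (\<Sum>j. ret_prob (fst G) (Suc j) (snd G) / real (Suc j))"
  have "1 \<le> D"
    using deg_pos[OF assms, of "snd G"] by (simp add: D_def Suc_le_eq)
  then have "0 \<le> ln D" "ln D \<le> D"
    using ln_le_minus_one[of D] by simp_all
  have "0 \<le> S" "S \<le> 4 * D * zeta_three_halves"
    unfolding S_def D_def using return_series_nonneg[OF assms] return_series_le[OF assms] by simp_all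
  have "\<bar>tree_entropy_integrand G\<bar> = \<bar>ln D - S\<bar>"
    unfolding tree_entropy_integrand_def D_def S_def ..
  also have "\<dots> \<le> D + 4 * D * zeta_three_halves"
    using \<open>0 \<le> ln D\<close> \<open>ln D \<le> D\<close> \<open>0 \<le> S\<close> \<open>S \<le> 4 * D * zeta_three_halves\<close> by linarith
  also have "\<dots> = (1 + 4 * zeta_three_halves) * D"
    by (simp add: algebra_simps)
  finally show ?thesis
    unfolding D_def .
qed

section \<open>Measurability\<close>

lemma measurable_adj: "(\<lambda>G. fst G u v) \<in> measurable graph_space (count_space UNIV)"
proof -
  have "(\<lambda>A. A u) \<in> measurable (\<Pi>\<^sub>M x\<in>UNIV. \<Pi>\<^sub>M y\<in>UNIV. count_space UNIV) (\<Pi>\<^sub>M y\<in>UNIV. count_space UNIV)"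
    "(\<lambda>B. B v) \<in> measurable (\<Pi>\<^sub>M y\<in>UNIV. count_space UNIV) (count_space UNIV)"
    by (rule measurable_component_singleton, simp)+
  then have "(\<lambda>A. A u v) \<in> measurable (\<Pi>\<^sub>M x\<in>UNIV. \<Pi>\<^sub>M y\<in>UNIV. count_space UNIV) (count_space UNIV)"
    by (rule measurable_compose)
  then show ?thesis
    unfolding graph_space_def by (rule measurable_compose[OF measurable_fst])
qed

lemma measurable_root: "snd \<in> measurable graph_space (count_space UNIV)"
  unfolding graph_space_def by measurable

lemma tendsto_sum_support_truncated:
  fixes h :: "nat \<Rightarrow> real" and c :: "nat \<Rightarrow> nat"
  shows "(\<lambda>n. if \<forall>z\<ge>n. c z = 0 then \<Sum>z<n. if c z \<noteq> 0 then h z else 0 else 0)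
           \<longlonglongrightarrow> (\<Sum>z\<in>{z. c z \<noteq> 0}. h z)"
proof (cases "finite {z. c z \<noteq> 0}")
  case True
  then obtain m where m: "\<And>z. c z \<noteq> 0 \<Longrightarrow> z < m"
    using finite_nat_set_iff_bounded by auto
  have "(if \<forall>z\<ge>n. c z = 0 then \<Sum>z<n. if c z \<noteq> 0 then h z else 0 else 0) = (\<Sum>z\<in>{z. c z \<noteq> 0}. h z)"
    if "m \<le> n" for n
  proof -
    have "{..<n} \<inter> {z. c z \<noteq> 0} = {z. c z \<noteq> 0}"
      using m that by (auto intro: less_le_trans)
    moreover have "\<forall>z\<ge>n. c z = 0"
      using m that by (meson le_trans not_le)
    moreover have "(\<Sum>z<n. if c z \<noteq> 0 then h z else 0) = (\<Sum>z\<in>{..<n} \<inter> {z. c z \<noteq> 0}. h z)"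
      by (simp only: sum.inter_restrict finite_lessThan mem_Collect_eq)
    ultimately show ?thesis
      by simp
  qed
  then have "\<forall>\<^sub>F n in sequentially.
      (if \<forall>z\<ge>n. c z = 0 then \<Sum>z<n. if c z \<noteq> 0 then h z else 0 else 0) = (\<Sum>z\<in>{z. c z \<noteq> 0}. h z)"
    by (rule eventually_sequentiallyI)
  then show ?thesis
    by (rule tendsto_eventually)
next
  case False
  have "(if \<forall>z\<ge>n. c z = 0 then \<Sum>z<n. if c z \<noteq> 0 then h z else 0 else 0) = 0" for n
  proof (rule if_not_P, rule notI)
    assume "\<forall>z\<ge>n. c z = 0"
    then have "{z. c z \<noteq> 0} \<subseteq> {..<n}"
      using not_less by blast
    then have "finite {z. c z \<noteq> 0}"
      by (rule finite_subset) simp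
    with False show False
      by contradiction
  qed
  then show ?thesis
    using False by simp
qed

lemma borel_measurable_sum_support:
  fixes h :: "'a \<Rightarrow> nat \<Rightarrow> real" and c :: "'a \<Rightarrow> nat \<Rightarrow> nat"
  assumes [measurable]: "\<And>z. (\<lambda>G. h G z) \<in> borel_measurable M"
    and [measurable]: "\<And>z. (\<lambda>G. c G z) \<in> measurable M (count_space UNIV)"
  shows "(\<lambda>G. \<Sum>z\<in>{z. c G z \<noteq> 0}. h G z) \<in> borel_measurable M"
proof (rule borel_measurable_LIMSEQ_real)
  show "(\<lambda>n. if \<forall>z\<ge>n. c G z = 0 then \<Sum>z<n. if c G z \<noteq> 0 then h G z else 0 else 0)
      \<longlonglongrightarrow> (\<Sum>z\<in>{z. c G z \<noteq> 0}. h G z)" for G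
    by (rule tendsto_sum_support_truncated)
  show "(\<lambda>G. if \<forall>z\<ge>n. c G z = 0 then \<Sum>z<n. if c G z \<noteq> 0 then h G z else 0 else 0)
      \<in> borel_measurable M" for n
    by measurable
qed

lemma measurable_deg: "(\<lambda>G. real (deg (fst G) v)) \<in> borel_measurable graph_space"
  unfolding deg_def of_nat_sum
proof (rule borel_measurable_sum_support)
  fix z
  have [measurable]: "(\<lambda>G. fst G v z) \<in> measurable graph_space (count_space UNIV)"
    by (rule measurable_adj)
  show "(\<lambda>G. real (fst G v z)) \<in> borel_measurable graph_space"
    by measurable
qed (rule measurable_adj)

lemma measurable_walk_prob: "(\<lambda>G. walk_prob (fst G) k y v) \<in> borel_measurable graph_space"
proof (induction k arbitrary: y)
  case 0
  show ?case
    by simp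
next
  case (Suc k)
  show ?case
    unfolding walk_prob.simps(2)
  proof (rule borel_measurable_sum_support)
    fix z
    have [measurable]: "(\<lambda>G. fst G y z) \<in> measurable graph_space (count_space UNIV)"
      "(\<lambda>G. real (deg (fst G) y)) \<in> borel_measurable graph_space"
      "(\<lambda>G. walk_prob (fst G) k z v) \<in> borel_measurable graph_space"
      by (rule measurable_adj measurable_deg Suc.IH)+
    show "(\<lambda>G. real (fst G y z) / real (deg (fst G) y) * walk_prob (fst G) k z v) \<in> borel_measurable graph_space"
      by measurable
  qed (rule measurable_adj)
qed

lemma measurable_deg_root: "(\<lambda>G. real (deg (fst G) (snd G))) \<in> borel_measurable graph_space"
  by (rule measurable_compose_countable'[where f = "\<lambda>i G. real (deg (fst G) i)" and I = UNIV])
     (simp_all add: measurable_deg measurable_root)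

lemma measurable_tree_entropy_integrand: "tree_entropy_integrand \<in> borel_measurable graph_space"
proof -
  have [measurable]: "(\<lambda>G. ret_prob (fst G) k (snd G)) \<in> borel_measurable graph_space" for k
    unfolding ret_prob_def
    by (rule measurable_compose_countable'[where f = "\<lambda>i G. walk_prob (fst G) k i i" and I = UNIV])
       (simp_all add: measurable_walk_prob measurable_root)
  have [measurable]: "(\<lambda>G. real (deg (fst G) (snd G))) \<in> borel_measurable graph_space"
    by (rule measurable_deg_root)
  show ?thesis
    unfolding tree_entropy_integrand_def[abs_def] by measurable
qed

theorem corollary3p9:
  fixes M :: "((nat \<Rightarrow> nat \<Rightarrow> nat) \<times> nat) measure"
  assumes "prob_space M"
    and "sets M = sets graph_space"
    and "AE G in M. inf_graph (fst G)"
    and "(\<integral>\<^sup>+ G. ennreal (real (deg (fst G) (snd G))) \<partial>M) < \<infinity>"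
  shows "(AE G in M. summable (\<lambda>k. ret_prob (fst G) (Suc k) (snd G) / real (Suc k)))
         \<and> integrable M tree_entropy_integrand"
proof
  show "AE G in M. summable (\<lambda>k. ret_prob (fst G) (Suc k) (snd G) / real (Suc k))"
    using assms(3) by eventually_elim (rule return_series_summable)
  have measurable_M: "measurable M borel = measurable graph_space borel"
    by (rule measurable_cong_sets[OF assms(2) refl])
  have "(\<lambda>G. real (deg (fst G) (snd G))) \<in> borel_measurable M"
    using measurable_deg_root unfolding measurable_M .
  then have "integrable M (\<lambda>G. real (deg (fst G) (snd G)))"
    using assms(4) by (intro integrableI_nonneg) auto
  then have "integrable M (\<lambda>G. (1 + 4 * zeta_three_halves) * real (deg (fst G) (snd G)))"
    by (rule integrable_mult_right)
  moreover have "tree_entropy_integrand \<in> borel_measurable M"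
    using measurable_tree_entropy_integrand unfolding measurable_M .
  moreover have "AE G in M. norm (tree_entropy_integrand G)
      \<le> norm ((1 + 4 * zeta_three_halves) * real (deg (fst G) (snd G)))"
    using assms(3) by eventually_elim (auto intro: order_trans[OF abs_tree_entropy_integrand_le] abs_ge_self)
  ultimately show "integrable M tree_entropy_integrand"
    by (rule Bochner_Integration.integrable_bound)
qed

end
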